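(* Let $n\ge4$, $r_1,r_2,r_3\in\mathbb{Z}_+$ with $r_1+r_2+r_3=n-1$, and let $-1<\alpha_1<1$, $0\le\alpha_2,\alpha_3<1$ with $\alpha_1+\alpha_2+\alpha_3=1$, $r_1+\alpha_1\ge r_2+\alpha_2$ and $r_1+\alpha_1\ge r_3+\alpha_3$. Then $$\mathfrak{L}_n(r_1,r_2,r_3,\alpha_1,\alpha_2,\alpha_3)\le \mathfrak{L}_n(r_1+r_3,r_2,0,\alpha_1,\alpha_2,\alpha_3)+2^{r_2+r_3+2}+2^{r_2}-r_3+\begin{cases}2^{r_3}, & r_2\ge1,\\ 2^{r_3+1}\ln n, & r_2=0.\end{cases}$$
   Context: Points of a triangle are identified with barycentric coordinates $\lambda=(\lambda_1,\lambda_2,\lambda_3)$, $\lambda_r\ge0$, $\sum\lambda_r=1$. For an integer $n\ge1$ let $I=\{i=(i_1,i_2,i_3)\in\mathbb{Z}_+^3: i_1+i_2+i_3=n\}$, and let $l_i(\lambda)=\prod_{s=1}^{3}\frac{1}{i_s!}\prod_{t=0}^{i_s-1}(n\lambda_s-t)$ (the Lagrange fundamental polynomials for the equally spaced nodes $i/n$, $i\in I$). The Lebesgue function is $\mathcal{L}_n(\lambda)=\sum_{i\in I}|l_i(\lambda)|$. For $r_s\in\mathbb{Z}_+$ with $r_1+r_2+r_3=n-1$ and reals $\alpha_s$ with $\alpha_1+\alpha_2+\alpha_3=1$, write $\mathfrak{L}_n(r_1,r_2,r_3,\alpha_1,\alpha_2,\alpha_3)=\mathcal{L}_n(\lambda)$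 where $\lambda_s=(r_s+\alpha_s)/n$, $s=1,2,3$. *)

theory Defs
  imports Complex_Main
begin

definition idx :: "nat \<Rightarrow> (nat \<times> nat \<times> nat) set" where
  "idx n = {(i1, i2, i3). i1 + i2 + i3 = n}"

definition lfac :: "nat \<Rightarrow> nat \<Rightarrow> real \<Rightarrow> real" where
  "lfac n k x = (1 / fact k) * (\<Prod>t<k. (real n * x - real t))"

text \<open>Lagrange fundamental polynomial l_i at barycentric point (x1,x2,x3).\<close>
definition lagr :: "nat \<Rightarrow> nat \<times> nat \<times> nat \<Rightarrow> real \<Rightarrow> real \<Rightarrow> real \<Rightarrow> real" where
  "lagr n i x1 x2 x3 = (case i of (i1, i2, i3) \<Rightarrow> lfac n i1 x1 * lfac n i2 x2 * lfac n i3 x3)"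

definition leb :: "nat \<Rightarrow> real \<Rightarrow> real \<Rightarrow> real \<Rightarrow> real" where
  "leb n x1 x2 x3 = (\<Sum>i\<in>idx n. \<bar>lagr n i x1 x2 x3\<bar>)"

definition frakL :: "nat \<Rightarrow> nat \<Rightarrow> nat \<Rightarrow> nat \<Rightarrow> real \<Rightarrow> real \<Rightarrow> real \<Rightarrow> real" where
  "frakL n r1 r2 r3 a1 a2 a3 =
     leb n ((real r1 + a1) / real n) ((real r2 + a2) / real n) ((real r3 + a3) / real n)"

end

theory Submission
  imports Defs "HOL-Analysis.Harmonic_Numbers"
begin

text \<open>With \<open>x\<^sub>s = n \<lambda>\<^sub>s = r\<^sub>s + \<alpha>\<^sub>s\<close>, each fundamental polynomial is the product of the
generalized binomials \<open>x\<^sub>s gchoose i\<^sub>s\<close>, so the Lebesgue function equals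
\<open>\<Sum>\<^sub>i |x\<^sub>2 gchoose i| V(x\<^sub>1, x\<^sub>3, n - i)\<close> with \<open>V(x, z, m) = \<Sum>\<^sub>a |x gchoose a| |z gchoose (m - a)|\<close>.
Moving one unit from \<open>z\<close> to \<open>x\<close> and applying Pascal's rule in both arguments, \<open>V\<close> can only
grow through indices \<open>a > \<lfloor>x\<rfloor> + 1\<close>, where the binomials \<open>x gchoose a\<close> alternate in sign;
their absolute values telescope to a total of at most \<open>1/4\<close>, so one move costs at most
\<open>2^N / 2\<close> when \<open>|(z - 1) gchoose k| \<le> 2^N\<close>. The \<open>r\<^sub>3\<close> moves together cost \<open>2^r\<^sub>3\<close> times
\<open>\<Sum>\<^sub>i |x\<^sub>2 gchoose i|\<close>, which is at most \<open>2^(r\<^sub>2 + 2)\<close> for \<open>r\<^sub>2 \<ge> 1\<close> and, by the harmonic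
sum, at most \<open>2 + ln n\<close> for \<open>r\<^sub>2 = 0\<close>. The hypotheses are only needed for \<open>x\<^sub>1 \<ge> 1\<close>,
which follows from \<open>3 x\<^sub>1 \<ge> x\<^sub>1 + x\<^sub>2 + x\<^sub>3 = n\<close>.\<close>

lemma gbinomial_Suc_rec:
  "(x::real) gchoose Suc k = (x gchoose k) * (x - real k) / real (Suc k)"
  using gbinomial_mult_1[of x k] by (simp add: field_simps)

lemma gbinomial_nonneg:
  fixes x :: real
  assumes "real k \<le> x + 1"
  shows "0 \<le> x gchoose k"
  using assms by (force simp: gbinomial_prod_rev intro!: divide_nonneg_nonneg prod_nonneg)

lemma gbinomial_mono':
  fixes x y :: real
  assumes "real k \<le> x + 1" "x \<le> y"
  shows "x gchoose k \<le> y gchoose k"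
  using assms by (force simp: gbinomial_prod_rev intro!: divide_right_mono prod_mono)

lemma gbinomial_Suc_le:
  fixes x :: real
  assumes "real k \<le> x" "x \<le> real k + 1"
  shows "x gchoose Suc k \<le> x - real k"
proof -
  have "x gchoose k \<le> real (Suc k) gchoose k"
    using assms by (intro gbinomial_mono) auto
  also have "\<dots> = real (Suc k)"
    by (metis binomial_gbinomial binomial_Suc_n)
  finally have "(x gchoose k) * (x - real k) \<le> real (Suc k) * (x - real k)"
    using assms by (intro mult_right_mono) auto
  then show ?thesis
    by (simp add: gbinomial_Suc_rec pos_divide_le_eq mult.commute)
qed

lemma abs_gbinomial_le_inverse:
  fixes y :: real
  assumes "0 \<le> y" "y \<le> 1" "1 \<le> k"
  shows "\<bar>y gchoose k\<bar> \<le> 1 / real k"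
  using assms(3)
proof (induction k rule: dec_induct)
  case base
  then show ?case using assms by simp
next
  case (step k)
  have "\<bar>y gchoose Suc k\<bar> = \<bar>y gchoose k\<bar> * \<bar>y - real k\<bar> / real (Suc k)"
    by (simp add: gbinomial_Suc_rec abs_mult)
  also have "\<dots> \<le> (1 / real k) * real k / real (Suc k)"
    using step assms by (intro divide_right_mono mult_mono) auto
  also have "\<dots> = 1 / real (Suc k)"
    using step by simp
  finally show ?case .
qed

lemma abs_gbinomial_le_1:
  fixes y :: real
  assumes "0 \<le> y" "y \<le> 1"
  shows "\<bar>y gchoose k\<bar> \<le> 1"
proof (cases "k = 0")
  case False
  then have "\<bar>y gchoose k\<bar> \<le> 1 / real k"
    using assms by (intro abs_gbinomial_le_inverse) auto
  also have "\<dots> \<le> 1"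
    using False by simp
  finally show ?thesis .
qed simp

lemma abs_gbinomial_le_power2:
  fixes y :: real
  assumes "0 \<le> y" "y \<le> real N + 1"
  shows "\<bar>y gchoose k\<bar> \<le> 2 ^ N"
  using assms
proof (induction N arbitrary: y k)
  case 0
  then show ?case using abs_gbinomial_le_1 by simp
next
  case (Suc N)
  show ?case
  proof (cases "y \<le> 1 \<or> k = 0")
    case True
    then have "\<bar>y gchoose k\<bar> \<le> 1"
      using Suc.prems abs_gbinomial_le_1 by auto
    also have "\<dots> \<le> 2 ^ Suc N"
      by (rule one_le_power) simp
    finally show ?thesis .
  next
    case False
    then obtain c where k: "k = Suc c"
      using not0_implies_Suc by blast
    have "y gchoose k = ((y - 1) gchoose c) + ((y - 1) gchoose Suc c)"
      using gbinomial_Suc_Suc[of "y - 1" c] k by simp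
    moreover have "\<bar>(y - 1) gchoose c\<bar> \<le> 2 ^ N" "\<bar>(y - 1) gchoose Suc c\<bar> \<le> 2 ^ N"
      using Suc False by auto
    ultimately show ?thesis
      by simp
  qed
qed

lemma abs_gbinomial_telescope:
  fixes x :: real
  assumes "0 < x" "x \<le> real A"
  shows "x * (\<Sum>a\<in>{A..A+d}. \<bar>x gchoose a\<bar>) + real (A+d+1) * \<bar>x gchoose (A+d+1)\<bar>
           = real A * \<bar>x gchoose A\<bar>"
proof (induction d)
  case 0
  have "real (A+1) * \<bar>x gchoose Suc A\<bar> = \<bar>x gchoose A\<bar> * (real A - x)"
    using assms by (simp add: gbinomial_Suc_rec abs_mult)
  then show ?case
    by (simp add: algebra_simps)
next
  case (Suc d)
  have "real (A+d+2) * \<bar>x gchoose Suc (A+d+1)\<bar> = \<bar>x gchoose (A+d+1)\<bar> * (real (A+d+1) - x)"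
    using assms by (simp add: gbinomial_Suc_rec abs_mult)
  moreover have "{A..A + Suc d} = insert (A+d+1) {A..A+d}"
    by auto
  ultimately show ?case
    using Suc by (simp add: algebra_simps)
qed

lemma abs_gbinomial_tail_le:
  fixes x :: real
  assumes "0 < x" "x \<le> real A"
  shows "x * (\<Sum>a\<in>{A..M}. \<bar>x gchoose a\<bar>) \<le> real A * \<bar>x gchoose A\<bar>"
proof (cases "A \<le> M")
  case True
  then obtain d where M: "M = A + d"
    using le_Suc_ex by blast
  have "0 \<le> real (A+d+1) * \<bar>x gchoose (A+d+1)\<bar>"
    by simp
  then show ?thesis
    unfolding M using abs_gbinomial_telescope[OF assms, of d] by linarith
qed simp

lemma abs_gbinomial_tail_le_quarter:
  fixes x :: real
  assumes "1 \<le> x" "real i \<le> x" "x \<le> real i + 1"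
  shows "(\<Sum>a\<in>{i+2..m}. \<bar>x gchoose a\<bar>) \<le> 1 / 4"
proof -
  have "x * (\<Sum>a\<in>{i+2..m}. \<bar>x gchoose a\<bar>) \<le> real (i+2) * \<bar>x gchoose (i+2)\<bar>"
    using assms by (intro abs_gbinomial_tail_le) auto
  also have "\<dots> = (x gchoose Suc i) * (real i + 1 - x)"
    using assms gbinomial_nonneg[of "Suc i" x]
    by (simp add: gbinomial_Suc_rec[of x "Suc i"] abs_mult)
  also have "\<dots> \<le> (x - real i) * (real i + 1 - x)"
    using assms gbinomial_Suc_le[of i x] by (intro mult_right_mono) auto
  also have "\<dots> \<le> 1 / 4"
    using sum_squares_ge_zero[of "2 * x - 2 * real i - 1" 0] by (simp add: algebra_simps power2_eq_square)
  finally have "x * (\<Sum>a\<in>{i+2..m}. \<bar>x gchoose a\<bar>) \<le> 1 / 4" .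
  moreover have "(\<Sum>a\<in>{i+2..m}. \<bar>x gchoose a\<bar>) \<le> x * (\<Sum>a\<in>{i+2..m}. \<bar>x gchoose a\<bar>)"
    using mult_right_mono[OF assms(1), of "\<Sum>a\<in>{i+2..m}. \<bar>x gchoose a\<bar>"] by (simp add: sum_nonneg)
  ultimately show ?thesis
    by linarith
qed

definition abs_vandermonde :: "real \<Rightarrow> real \<Rightarrow> nat \<Rightarrow> real" where
  "abs_vandermonde x z m = (\<Sum>a\<le>m. \<bar>x gchoose a\<bar> * \<bar>z gchoose (m - a)\<bar>)"

definition pascal_defect :: "real \<Rightarrow> nat \<Rightarrow> real" where
  "pascal_defect x a =
     \<bar>x gchoose a\<bar> + (if a = 0 then 0 else \<bar>x gchoose (a - 1)\<bar>) - \<bar>(x + 1) gchoose a\<bar>"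

lemma gbinomial_add_1:
  "((x::real) + 1) gchoose a = (x gchoose a) + (if a = 0 then 0 else x gchoose (a - 1))"
  by (cases a) (simp_all add: gbinomial_Suc_Suc)

lemma pascal_defect_le: "pascal_defect x a \<le> 2 * \<bar>x gchoose a\<bar>"
  unfolding pascal_defect_def gbinomial_add_1 by auto

lemma pascal_defect_eq_0:
  assumes "real a \<le> x + 1"
  shows "pascal_defect x a = 0"
proof -
  have "0 \<le> x gchoose a" "a \<noteq> 0 \<Longrightarrow> 0 \<le> x gchoose (a - 1)"
    using assms by (auto intro!: gbinomial_nonneg)
  then show ?thesis
    unfolding pascal_defect_def gbinomial_add_1 by auto
qed

lemma abs_vandermonde_shift_le:
  "abs_vandermonde x (y + 1) m
     \<le> abs_vandermonde (x + 1) y m + (\<Sum>a\<le>m. pascal_defect x a * \<bar>y gchoose (m - a)\<bar>)"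
proof -
  define v where "v a = (if a = 0 then 0 else \<bar>x gchoose (a - 1)\<bar>)" for a
  define w where "w a = \<bar>y gchoose (m - a)\<bar>" for a
  have pascal: "\<bar>(y + 1) gchoose (m - a)\<bar> \<le> w a + (if a < m then \<bar>y gchoose (m - Suc a)\<bar> else 0)"
    for a
  proof (cases "a < m")
    case True
    then have "m - a = Suc (m - Suc a)"
      by simp
    then show ?thesis
      using True gbinomial_Suc_Suc[of y "m - Suc a"] by (simp add: w_def abs_triangle_ineq add.commute)
  qed (simp add: w_def)
  have shift: "(\<Sum>a\<le>m. \<bar>x gchoose a\<bar> * (if a < m then \<bar>y gchoose (m - Suc a)\<bar> else 0))
      = (\<Sum>a\<le>m. v a * w a)"
  proof (cases m)
    case (Suc k)
    have "(\<Sum>a\<le>m. \<bar>x gchoose a\<bar> * (if a < m then \<bar>y gchoose (m - Suc a)\<bar> else 0))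
        = (\<Sum>a\<le>k. \<bar>x gchoose a\<bar> * \<bar>y gchoose (k - a)\<bar>)"
      unfolding Suc by simp
    also have "\<dots> = (\<Sum>a\<le>m. v a * w a)"
      by (simp add: Suc v_def w_def sum.atMost_Suc_shift del: sum.atMost_Suc)
    finally show ?thesis .
  qed (simp add: v_def)
  have "abs_vandermonde x (y + 1) m
      \<le> (\<Sum>a\<le>m. \<bar>x gchoose a\<bar> * (w a + (if a < m then \<bar>y gchoose (m - Suc a)\<bar> else 0)))"
    unfolding abs_vandermonde_def by (intro sum_mono mult_left_mono pascal) auto
  also have "\<dots> = (\<Sum>a\<le>m. (\<bar>x gchoose a\<bar> + v a) * w a)"
    by (simp add: distrib_left distrib_right sum.distrib shift)
  also have "\<dots> = abs_vandermonde (x + 1) y m + (\<Sum>a\<le>m. pascal_defect x a * w a)"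
    by (simp add: abs_vandermonde_def pascal_defect_def v_def w_def algebra_simps
        flip: sum.distrib)
  finally show ?thesis
    by (simp add: w_def)
qed

lemma abs_vandermonde_shift_le_power2:
  assumes "1 \<le> x" "0 \<le> y" "y \<le> real N + 1"
  shows "abs_vandermonde x (y + 1) m \<le> abs_vandermonde (x + 1) y m + 2 ^ N / 2"
proof -
  define i where "i = nat \<lfloor>x\<rfloor>"
  have i: "real i \<le> x" "x \<le> real i + 1"
    using assms(1) unfolding i_def by linarith+
  have defect: "pascal_defect x a * \<bar>y gchoose (m - a)\<bar>
      \<le> (if i + 1 < a then 2 ^ (N + 1) * \<bar>x gchoose a\<bar> else 0)" for a
  proof (cases "i + 1 < a")
    case True
    have "pascal_defect x a * \<bar>y gchoose (m - a)\<bar> \<le> (2 * \<bar>x gchoose a\<bar>) * 2 ^ N"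
      using pascal_defect_le abs_gbinomial_le_power2[OF assms(2,3)]
      by (intro mult_mono) auto
    then show ?thesis
      using True by (simp add: algebra_simps)
  next
    case False
    then show ?thesis
      using i by (simp add: pascal_defect_eq_0)
  qed
  have "(\<Sum>a\<le>m. pascal_defect x a * \<bar>y gchoose (m - a)\<bar>)
      \<le> (\<Sum>a\<le>m. if i + 1 < a then 2 ^ (N + 1) * \<bar>x gchoose a\<bar> else 0)"
    by (intro sum_mono defect)
  also have "\<dots> = 2 ^ (N + 1) * (\<Sum>a\<in>{i+2..m}. \<bar>x gchoose a\<bar>)"
    by (simp add: sum.If_cases sum_distrib_left Int_def) (intro sum.cong; auto)
  also have "\<dots> \<le> 2 ^ (N + 1) * (1 / 4)"
    using abs_gbinomial_tail_le_quarter[OF assms(1) i] by (intro mult_left_mono) auto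
  finally show ?thesis
    using abs_vandermonde_shift_le[of x y m] by simp
qed

lemma abs_vandermonde_shift_iter:
  assumes "1 \<le> x" "0 \<le> y" "y \<le> 1"
  shows "abs_vandermonde x (real d + y) m \<le> abs_vandermonde (x + real d) y m + 2 ^ d"
  using assms(1)
proof (induction d arbitrary: x)
  case (Suc d)
  have "abs_vandermonde x (real (Suc d) + y) m = abs_vandermonde x ((real d + y) + 1) m"
    by (simp add: algebra_simps)
  also have "\<dots> \<le> abs_vandermonde (x + 1) (real d + y) m + 2 ^ d / 2"
    using Suc.prems assms by (intro abs_vandermonde_shift_le_power2) auto
  also have "\<dots> \<le> abs_vandermonde (x + 1 + real d) y m + 2 ^ d + 2 ^ d / 2"
    using Suc.IH[of "x + 1"] Suc.prems by simp
  also have "\<dots> \<le> abs_vandermonde (x + real (Suc d)) y m + 2 ^ Suc d"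
    by (simp add: algebra_simps)
  finally show ?case .
qed simp

lemma lfac_eq_gbinomial: "0 < n \<Longrightarrow> lfac n k (x / real n) = x gchoose k"
  by (simp add: lfac_def gbinomial_prod_rev atLeast0LessThan)

lemma leb_eq_sum_abs_vandermonde:
  assumes "0 < n"
  shows "leb n (x / real n) (y / real n) (z / real n)
           = (\<Sum>i\<le>n. \<bar>y gchoose i\<bar> * abs_vandermonde x z (n - i))"
proof -
  define h where "h p = (case p of (i, a) \<Rightarrow> (a, i, n - i - a))" for p :: "nat \<times> nat"
  define S where "S = (SIGMA i:{..n}. {..n - i})"
  have "idx n = h ` S"
  proof
    show "idx n \<subseteq> h ` S"
    proof
      fix p assume "p \<in> idx n"
      then obtain a i c where "p = (a, i, c)" "a + i + c = n"
        unfolding idx_def by auto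
      then have "p = h (i, a)" "(i, a) \<in> S"
        by (auto simp: h_def S_def)
      then show "p \<in> h ` S"
        by blast
    qed
  qed (auto simp: h_def idx_def S_def)
  moreover have "inj_on h S"
    by (auto simp: inj_on_def h_def S_def)
  ultimately have "leb n (x / real n) (y / real n) (z / real n)
      = (\<Sum>i\<le>n. \<Sum>a\<le>n - i. \<bar>lagr n (h (i, a)) (x / real n) (y / real n) (z / real n)\<bar>)"
    unfolding leb_def S_def by (simp add: sum.reindex sum.Sigma split_beta)
  also have "\<dots> = (\<Sum>i\<le>n. \<bar>y gchoose i\<bar> * abs_vandermonde x z (n - i))"
    unfolding abs_vandermonde_def sum_distrib_left
    by (intro sum.cong refl)
      (simp add: h_def lagr_def lfac_eq_gbinomial[OF assms] abs_mult algebra_simps)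
  finally show ?thesis .
qed

lemma sum_abs_gbinomial_le_ln:
  fixes y :: real
  assumes "0 \<le> y" "y \<le> 1" "1 \<le> n"
  shows "(\<Sum>i\<le>n. \<bar>y gchoose i\<bar>) \<le> 2 + ln (real n)"
proof -
  have "(\<Sum>i\<in>{1..n}. \<bar>y gchoose i\<bar>) \<le> (\<Sum>i\<in>{1..n}. inverse (real i))"
    using abs_gbinomial_le_inverse[OF assms(1,2)] by (intro sum_mono) (auto simp: divide_inverse)
  also have "\<dots> = harm n"
    by (simp add: harm_def)
  also have "\<dots> \<le> 1 + ln (real n)"
    using euler_mascheroni_sequence_decreasing[of 1 n] assms(3) by (simp add: harm_def)
  finally show ?thesis
    by (simp add: atMost_atLeast0 atLeastAtMost_insertL[symmetric, of 0 n] sum.atLeast_Suc_atMost)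
qed

lemma sum_abs_gbinomial_le_power2:
  fixes x :: real
  assumes "1 \<le> x" "real r \<le> x" "x \<le> real r + 1"
  shows "(\<Sum>i\<le>n. \<bar>x gchoose i\<bar>) \<le> 2 ^ (r + 1) + 1 / 4"
proof -
  have "(\<Sum>i\<le>n. \<bar>x gchoose i\<bar>) \<le> (\<Sum>i\<in>{..r+1} \<union> {r+2..n}. \<bar>x gchoose i\<bar>)"
    by (intro sum_mono2) auto
  also have "\<dots> = (\<Sum>i\<le>r+1. \<bar>x gchoose i\<bar>) + (\<Sum>i\<in>{r+2..n}. \<bar>x gchoose i\<bar>)"
    by (intro sum.union_disjoint) auto
  also have "(\<Sum>i\<le>r+1. \<bar>x gchoose i\<bar>) \<le> (\<Sum>i\<le>r+1. real (Suc r) gchoose i)"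
  proof (intro sum_mono)
    fix i assume "i \<in> {..r+1}"
    then have "real i \<le> x + 1"
      using assms by auto
    then show "\<bar>x gchoose i\<bar> \<le> real (Suc r) gchoose i"
      using assms gbinomial_nonneg gbinomial_mono' by simp
  qed
  also have "(\<Sum>i\<le>r+1. real (Suc r) gchoose i) = real (\<Sum>i\<le>Suc r. Suc r choose i)"
    by (simp add: binomial_gbinomial del: sum.atMost_Suc)
  also have "\<dots> = 2 ^ (r + 1)"
    by (simp only: choose_row_sum) simp
  also have "(\<Sum>i\<in>{r+2..n}. \<bar>x gchoose i\<bar>) \<le> 1 / 4"
    using abs_gbinomial_tail_le_quarter[OF assms] .
  finally show ?thesis
    by simp
qed

lemma frakL_shift_le:
  assumes "0 < n" "1 \<le> real r1 + a1" "0 \<le> a3" "a3 \<le> 1"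
  shows "frakL n r1 r2 r3 a1 a2 a3
           \<le> frakL n (r1 + r3) r2 0 a1 a2 a3 + 2 ^ r3 * (\<Sum>i\<le>n. \<bar>(real r2 + a2) gchoose i\<bar>)"
proof -
  let ?x = "real r1 + a1" and ?y = "real r2 + a2"
  have "frakL n r1 r2 r3 a1 a2 a3
      = (\<Sum>i\<le>n. \<bar>?y gchoose i\<bar> * abs_vandermonde ?x (real r3 + a3) (n - i))"
    unfolding frakL_def by (rule leb_eq_sum_abs_vandermonde[OF assms(1)])
  also have "\<dots> \<le> (\<Sum>i\<le>n. \<bar>?y gchoose i\<bar> * (abs_vandermonde (?x + real r3) a3 (n - i) + 2 ^ r3))"
    using abs_vandermonde_shift_iter[OF assms(2-4)] by (intro sum_mono mult_left_mono) auto
  also have "\<dots> = frakL n (r1 + r3) r2 0 a1 a2 a3 + 2 ^ r3 * (\<Sum>i\<le>n. \<bar>?y gchoose i\<bar>)"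
    using leb_eq_sum_abs_vandermonde[OF assms(1), of "real (r1 + r3) + a1" ?y a3]
    by (simp add: frakL_def sum.distrib sum_distrib_left algebra_simps)
  finally show ?thesis .
qed

lemma power2_mult_sum_abs_gbinomial_le:
  fixes a :: real
  assumes "0 \<le> a" "a \<le> 1" "1 \<le> n"
  shows "2 ^ d * (\<Sum>i\<le>n. \<bar>(real r + a) gchoose i\<bar>)
           \<le> 2 ^ (r + d + 2) + 2 ^ r - real d + (if r \<ge> 1 then 2 ^ d else 2 ^ (d + 1) * ln (real n))"
proof -
  define G where "G = (\<Sum>i\<le>n. \<bar>(real r + a) gchoose i\<bar>)"
  have d: "real d \<le> 2 ^ d"
    by (metis less_exp less_imp_le of_nat_le_iff of_nat_numeral of_nat_power)
  show ?thesis
  proof (cases "r \<ge> 1")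
    case True
    then have "G \<le> 2 ^ (r + 1) + 1 / 4"
      unfolding G_def using assms by (intro sum_abs_gbinomial_le_power2) auto
    then have "G \<le> 2 ^ (r + 2)"
      using one_le_power[of "2::real" "r + 1"] by simp
    then have "2 ^ d * G \<le> 2 ^ d * 2 ^ (r + 2)"
      by (intro mult_left_mono) auto
    also have "\<dots> = 2 ^ (r + d + 2)"
      by (simp flip: power_add)
    finally have "2 ^ d * G \<le> 2 ^ (r + d + 2)" .
    moreover have "(0::real) \<le> 2 ^ r"
      by simp
    ultimately show ?thesis
      unfolding if_P[OF True] G_def[symmetric] using d by linarith
  next
    case False
    then have r: "r = 0"
      by simp
    then have "G \<le> 2 + ln (real n)"
      unfolding G_def using assms by (intro sum_abs_gbinomial_le_ln) auto
    then have "2 ^ d * G \<le> 2 ^ d * (2 + ln (real n))"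
      by (intro mult_left_mono) auto
    also have "\<dots> = 2 * 2 ^ d + 2 ^ d * ln (real n)"
      by (simp add: algebra_simps)
    finally have "2 ^ d * G \<le> 2 * 2 ^ d + 2 ^ d * ln (real n)" .
    moreover have "0 \<le> (2::real) ^ d * ln (real n)"
      using assms(3) by simp
    moreover have "(2::real) ^ (d + 1) * ln (real n) = 2 * (2 ^ d * ln (real n))"
      by simp
    moreover have "(2::real) ^ (r + d + 2) = 4 * 2 ^ d" "(2::real) ^ r = 1"
      using r by simp_all
    ultimately show ?thesis
      unfolding if_not_P[OF False] G_def[symmetric] using d by linarith
  qed
qed

theorem lemma15:
  fixes n r1 r2 r3 :: nat and a1 a2 a3 :: real
  assumes "n \<ge> 4"
    and "r1 + r2 + r3 = n - 1"
    and "-1 < a1" and "a1 < 1"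
    and "0 \<le> a2" and "a2 < 1"
    and "0 \<le> a3" and "a3 < 1"
    and "a1 + a2 + a3 = 1"
    and "real r1 + a1 \<ge> real r2 + a2"
    and "real r1 + a1 \<ge> real r3 + a3"
  shows "frakL n r1 r2 r3 a1 a2 a3
    \<le> frakL n (r1 + r3) r2 0 a1 a2 a3 + 2 ^ (r2 + r3 + 2) + 2 ^ r2 - real r3
       + (if r2 \<ge> 1 then 2 ^ r3 else 2 ^ (r3 + 1) * ln (real n))"
proof -
  have "real r1 + real r2 + real r3 + 1 = real n"
    using assms(1,2) by (simp flip: of_nat_add)
  then have "1 \<le> real r1 + a1"
    using assms(1,9-11) by simp
  then have "frakL n r1 r2 r3 a1 a2 a3
      \<le> frakL n (r1 + r3) r2 0 a1 a2 a3 + 2 ^ r3 * (\<Sum>i\<le>n. \<bar>(real r2 + a2) gchoose i\<bar>)"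
    using assms by (intro frakL_shift_le) auto
  moreover have "2 ^ r3 * (\<Sum>i\<le>n. \<bar>(real r2 + a2) gchoose i\<bar>)
      \<le> 2 ^ (r2 + r3 + 2) + 2 ^ r2 - real r3 + (if r2 \<ge> 1 then 2 ^ r3 else 2 ^ (r3 + 1) * ln (real n))"
    using assms by (intro power2_mult_sum_abs_gbinomial_le) auto
  ultimately show ?thesis
    by linarith
qed

end
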